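(* $A_4(11,8)\le 60$.
   Context: For an integer $q\ge2$ let $[q]=\{0,1,\dots,q-1\}$. The Hamming distance between $u,v\in[q]^n$ is the number of coordinates in which they differ; $A_q(n,d)$ is the maximum cardinality of a code $C\subseteq[q]^n$ in which any two distinct codewords have Hamming distance at least $d$. *)

theory Defs
  imports Main
begin

definition words :: "nat \<Rightarrow> nat \<Rightarrow> nat list set" where
  "words q n = {w. length w = n \<and> (\<forall>i<n. w ! i < q)}"

definition hamming_dist :: "nat list \<Rightarrow> nat list \<Rightarrow> nat" where
  "hamming_dist u v = card {i. i < length u \<and> u ! i \<noteq> v ! i}"

definition is_code :: "nat \<Rightarrow> nat \<Rightarrow> nat \<Rightarrow> nat list set \<Rightarrow> bool" where
  "is_code q n d C \<longleftrightarrow> C \<subseteq> words q n \<and>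
     (\<forall>u\<in>C. \<forall>v\<in>C. u \<noteq> v \<longrightarrow> hamming_dist u v \<ge> d)"

text \<open>A_q(n,d): maximum cardinality of such a code (the set of codes is finite).\<close>
definition A_code :: "nat \<Rightarrow> nat \<Rightarrow> nat \<Rightarrow> nat" where
  "A_code q n d = Max {card C | C. is_code q n d C}"

end

theory Submission
  imports Defs
begin

text \<open>
  Suppose \<open>C\<close> is a quaternary code of length 11, minimum distance 8 and size 61, and write
  \<open>a(u,v)\<close> for the number of coordinates where \<open>u\<close> and \<open>v\<close> agree, so \<open>a(u,v) \<le> 3\<close> for
  distinct codewords. The codewords with a fixed symbol in a fixed coordinate form a code
  in the remaining 10 coordinates; Plotkin's averaging argument bounds it by 16, with
  equality only if every other coordinate is balanced (4 words per symbol). Hence each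
  column of \<open>C\<close> has symbol counts between 13 and 16.

  The weight \<open>a(3 - a)\<close> is nonnegative on pairs of distinct codewords. Its total is a
  combination of first and second moments of \<open>a\<close>, i.e. of the numbers of pairs agreeing
  in one coordinate (at most 937 per coordinate) and in two coordinates (at least 235 per
  pair of coordinates); this gives total weight at most 132. By pigeonhole some class
  \<open>S\<close> has 16 words; a codeword outside \<open>S\<close> then agrees 40 times in total with \<open>S\<close>, so
  \<open>3 - a\<close> sums to 8 over \<open>S\<close>, which is not a multiple of 3. Thus some \<open>a\<close> is 1 or 2 and the
  weight between that codeword and \<open>S\<close> is at least 2, forcing total weight
  \<open>\<ge> 2 \<cdot> 2 \<cdot> 45 = 180\<close>.
\<close>

definition agreements :: "nat list \<Rightarrow> nat list \<Rightarrow> nat" where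
  "agreements u v = card {i. i < length u \<and> u ! i = v ! i}"

lemma agreements_eq_sum: "agreements u v = (\<Sum>i<length u. of_bool (u ! i = v ! i))"
  by (simp add: agreements_def lessThan_def Collect_conj_eq Int_commute)

lemma agreements_add_hamming_dist: "agreements u v + hamming_dist u v = length u"
proof -
  have "hamming_dist u v = (\<Sum>i<length u. of_bool (u ! i \<noteq> v ! i))"
    by (simp add: hamming_dist_def lessThan_def Collect_conj_eq Int_commute)
  then have "agreements u v + hamming_dist u v
      = (\<Sum>i<length u. of_bool (u ! i = v ! i) + of_bool (u ! i \<noteq> v ! i))"
    by (simp add: agreements_eq_sum sum.distrib del: sum_of_bool_eq)
  also have "\<dots> = (\<Sum>i<length u. 1)"
    by (intro sum.cong) auto
  finally show ?thesis by simp
qed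

lemma agreements_self [simp]: "agreements u u = length u"
  by (simp add: agreements_def)

lemma agreements_commute: "length u = length v \<Longrightarrow> agreements u v = agreements v u"
  by (simp add: agreements_def eq_commute)

lemma sum_agreements:
  assumes "finite K" "length u = n"
  shows "(\<Sum>v\<in>K. agreements u v) = (\<Sum>j<n. card {v\<in>K. v ! j = u ! j})"
proof -
  have "(\<Sum>v\<in>K. agreements u v) = (\<Sum>v\<in>K. \<Sum>j<n. of_bool (v ! j = u ! j))"
    using assms(2) by (simp add: agreements_eq_sum eq_commute del: sum_of_bool_eq)
  also have "\<dots> = (\<Sum>j<n. \<Sum>v\<in>K. of_bool (v ! j = u ! j))"
    by (rule sum.swap)
  also have "\<dots> = (\<Sum>j<n. card {v\<in>K. v ! j = u ! j})"
    using assms(1) by (simp add: Collect_conj_eq)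
  finally show ?thesis .
qed

lemma sum_agreements_sq:
  assumes "finite K" "length u = n"
  shows "(\<Sum>v\<in>K. agreements u v ^ 2) = (\<Sum>i<n. \<Sum>j<n. card {v\<in>K. v ! i = u ! i \<and> v ! j = u ! j})"
proof -
  have "agreements u v ^ 2 = (\<Sum>i<n. \<Sum>j<n. of_bool (v ! i = u ! i \<and> v ! j = u ! j))" for v
    using assms(2)
    by (simp add: agreements_eq_sum power2_eq_square sum_product eq_commute of_bool_conj
        del: sum_of_bool_eq)
  then have "(\<Sum>v\<in>K. agreements u v ^ 2)
      = (\<Sum>v\<in>K. \<Sum>i<n. \<Sum>j<n. of_bool (v ! i = u ! i \<and> v ! j = u ! j))"
    by (simp del: sum_of_bool_eq)
  also have "\<dots> = (\<Sum>i<n. \<Sum>v\<in>K. \<Sum>j<n. of_bool (v ! i = u ! i \<and> v ! j = u ! j))"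
    by (rule sum.swap)
  also have "\<dots> = (\<Sum>i<n. \<Sum>j<n. \<Sum>v\<in>K. of_bool (v ! i = u ! i \<and> v ! j = u ! j))"
    by (intro sum.cong refl sum.swap)
  also have "\<dots> = (\<Sum>i<n. \<Sum>j<n. card {v\<in>K. v ! i = u ! i \<and> v ! j = u ! j})"
    using assms(1) by (simp add: Collect_conj_eq)
  finally show ?thesis .
qed

lemma sum_card_fiber:
  assumes "finite K" "finite B" "f ` K \<subseteq> B"
  shows "(\<Sum>b\<in>B. card {u\<in>K. f u = b}) = card K"
  using sum.group[OF assms, of "\<lambda>_. 1::nat"] by simp

lemma sum_card_fiber_sq:
  assumes "finite K" "finite B" "f ` K \<subseteq> B"
  shows "(\<Sum>u\<in>K. card {v\<in>K. f v = f u}) = (\<Sum>b\<in>B. card {u\<in>K. f u = b} ^ 2)"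
proof -
  have "(\<Sum>u\<in>K. card {v\<in>K. f v = f u}) = (\<Sum>b\<in>B. \<Sum>u\<in>{u\<in>K. f u = b}. card {v\<in>K. f v = f u})"
    by (rule sum.group[OF assms, symmetric])
  also have "\<dots> = (\<Sum>b\<in>B. card {u\<in>K. f u = b} ^ 2)"
    by (intro sum.cong) (auto simp: power2_eq_square)
  finally show ?thesis .
qed

lemma sum_sq_deviation:
  fixes m :: "'a \<Rightarrow> 'b::comm_ring_1"
  assumes "finite B"
  shows "(\<Sum>b\<in>B. (of_nat (card B) * m b - sum m B) ^ 2)
           = of_nat (card B) * (of_nat (card B) * (\<Sum>b\<in>B. m b ^ 2) - sum m B ^ 2)"
proof -
  define c where "c = (of_nat (card B) :: 'b)"
  have "(\<Sum>b\<in>B. (c * m b - sum m B) ^ 2)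
      = (\<Sum>b\<in>B. c ^ 2 * m b ^ 2 - 2 * c * sum m B * m b + sum m B ^ 2)"
    by (simp add: power2_eq_square algebra_simps)
  also have "\<dots> = c ^ 2 * (\<Sum>b\<in>B. m b ^ 2) - 2 * c * sum m B * sum m B + c * sum m B ^ 2"
    by (simp add: c_def sum.distrib sum_subtractf sum_distrib_left)
  finally show ?thesis
    by (simp add: c_def power2_eq_square algebra_simps)
qed

lemma square_ge_tangent: "(2 * k + 1) * m - k * (k + 1) \<le> (m::int) ^ 2"
proof -
  have "0 \<le> (m - k) * (m - k - 1)"
    by (cases "m \<le> k") (auto intro: mult_nonpos_nonpos)
  then show ?thesis by (simp add: power2_eq_square algebra_simps)
qed

lemma square_le_chord: "a \<le> m \<Longrightarrow> m \<le> b \<Longrightarrow> (m::int) ^ 2 \<le> (a + b) * m - a * b"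
  using mult_nonneg_nonpos[of "m - a" "m - b"] by (simp add: power2_eq_square algebra_simps)

lemma sum_card_fiber_sq_ge:
  assumes "finite K" "finite B" "f ` K \<subseteq> B"
  shows "(2 * k + 1) * int (card K) - k * (k + 1) * int (card B)
           \<le> int (\<Sum>u\<in>K. card {v\<in>K. f v = f u})"
proof -
  have "(2 * k + 1) * int (card K) - k * (k + 1) * int (card B)
      = (\<Sum>b\<in>B. (2 * k + 1) * int (card {u\<in>K. f u = b}) - k * (k + 1))"
    by (simp add: sum_subtractf sum_distrib_left flip: sum_card_fiber[OF assms])
  also have "\<dots> \<le> (\<Sum>b\<in>B. int (card {u\<in>K. f u = b}) ^ 2)"
    by (intro sum_mono square_ge_tangent)
  also have "\<dots> = int (\<Sum>u\<in>K. card {v\<in>K. f v = f u})"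
    by (simp add: sum_card_fiber_sq[OF assms])
  finally show ?thesis .
qed

lemma sum_sq_column_deviation:
  assumes "K \<subseteq> words q n" "finite K" "j < n"
  shows "(\<Sum>b<q. (int q * int (card {u\<in>K. u ! j = b}) - int (card K)) ^ 2)
           = int q * (int q * int (\<Sum>u\<in>K. card {v\<in>K. v ! j = u ! j}) - int (card K) ^ 2)"
proof -
  have fibers: "finite K" "finite {..<q}" "(\<lambda>w. w ! j) ` K \<subseteq> {..<q}"
    using assms by (auto simp: words_def)
  show ?thesis
    using sum_sq_deviation[of "{..<q}" "\<lambda>b. int (card {u\<in>K. u ! j = b})"]
    by (simp add: sum_card_fiber_sq[OF fibers] flip: of_nat_sum of_nat_power sum_card_fiber[OF fibers])
qed

lemma sum_offdiag_ge_cut: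
  fixes g :: "'a \<Rightarrow> 'a \<Rightarrow> 'b::ordered_comm_monoid_add"
  assumes C: "finite C" and S: "S \<subseteq> C"
    and nonneg: "\<And>u v. u \<in> C \<Longrightarrow> v \<in> C \<Longrightarrow> u \<noteq> v \<Longrightarrow> 0 \<le> g u v"
    and sym: "\<And>u v. u \<in> C \<Longrightarrow> v \<in> C \<Longrightarrow> g u v = g v u"
  shows "(\<Sum>u\<in>C - S. \<Sum>v\<in>S. g u v) + (\<Sum>u\<in>C - S. \<Sum>v\<in>S. g u v)
           \<le> (\<Sum>u\<in>C. \<Sum>v\<in>C - {u}. g u v)"
proof -
  have "(\<Sum>u\<in>C - S. \<Sum>v\<in>S. g u v) = (\<Sum>v\<in>S. \<Sum>u\<in>C - S. g u v)"
    by (rule sum.swap)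
  also have "\<dots> = (\<Sum>u\<in>S. \<Sum>v\<in>C - S. g u v)"
    using S by (intro sum.cong refl) (use sym in blast)
  also have "\<dots> \<le> (\<Sum>u\<in>S. \<Sum>v\<in>C - {u}. g u v)"
    using C S nonneg by (intro sum_mono sum_mono2) auto
  finally have "(\<Sum>u\<in>C - S. \<Sum>v\<in>S. g u v) \<le> (\<Sum>u\<in>S. \<Sum>v\<in>C - {u}. g u v)" .
  moreover have "(\<Sum>u\<in>C - S. \<Sum>v\<in>S. g u v) \<le> (\<Sum>u\<in>C - S. \<Sum>v\<in>C - {u}. g u v)"
    using C S nonneg by (intro sum_mono sum_mono2) auto
  ultimately show ?thesis
    using sum.subset_diff[OF S C, of "\<lambda>u. \<Sum>v\<in>C - {u}. g u v"] by (simp add: add_mono add.commute)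
qed

lemma is_code_subset: "is_code q n d C \<Longrightarrow> D \<subseteq> C \<Longrightarrow> is_code q n d D"
  by (auto simp: is_code_def)

definition weight :: "nat list \<Rightarrow> nat list \<Rightarrow> int" where
  "weight u v = int (agreements u v) * (3 - int (agreements u v))"

locale code_11_61_8 =
  fixes C :: "nat list set"
  assumes code: "is_code 4 11 8 C" and card_C: "card C = 61"
begin

lemma finite_C: "finite C"
  using card_C by (intro card_ge_0_finite) simp

lemma words_C: "C \<subseteq> words 4 11"
  using code by (simp add: is_code_def)

lemma length_C: "u \<in> C \<Longrightarrow> length u = 11"
  using words_C by (auto simp: words_def)

lemma nth_C: "u \<in> C \<Longrightarrow> j < 11 \<Longrightarrow> u ! j < 4"
  using words_C by (auto simp: words_def)

lemma agreements_le_3: "u \<in> C \<Longrightarrow> v \<in> C \<Longrightarrow> u \<noteq> v \<Longrightarrow> agreements u v \<le> 3"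
  using code agreements_add_hamming_dist[of u v] length_C by (force simp: is_code_def)

lemma weight_nonneg: "u \<in> C \<Longrightarrow> v \<in> C \<Longrightarrow> u \<noteq> v \<Longrightarrow> 0 \<le> weight u v"
  using agreements_le_3 by (simp add: weight_def)

lemma weight_commute: "u \<in> C \<Longrightarrow> v \<in> C \<Longrightarrow> weight u v = weight v u"
  using length_C agreements_commute by (simp add: weight_def)

lemma sum_agreements_le:
  assumes "K \<subseteq> C" "u \<in> K"
  shows "(\<Sum>v\<in>K. agreements u v) \<le> 3 * card K + 8"
proof -
  have "finite K"
    using assms(1) finite_C finite_subset by blast
  have "(\<Sum>v\<in>K. agreements u v) = agreements u u + (\<Sum>v\<in>K - {u}. agreements u v)"
    using sum.remove[OF \<open>finite K\<close> assms(2)] .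
  also have "\<dots> \<le> 11 + (\<Sum>v\<in>K - {u}. 3)"
    using assms by (intro add_mono sum_mono) (auto simp: subset_iff length_C intro!: agreements_le_3)
  also have "\<dots> = 3 * card K + 8"
    using card.remove[OF \<open>finite K\<close> assms(2)] by simp
  finally show ?thesis .
qed

(* Plotkin's averaging over the other ten columns, with the squared deviations of their
   symbol counts from card K / 4 kept as slack. *)
lemma constant_column_bound:
  assumes "K \<subseteq> C" "i < 11" "\<And>u. u \<in> K \<Longrightarrow> u ! i = a"
  shows "8 * int (card K) ^ 2
           + (\<Sum>j\<in>{..<11} - {i}. \<Sum>b<4. (4 * int (card {u\<in>K. u ! j = b}) - int (card K)) ^ 2)
         \<le> 128 * int (card K)"
proof -
  define k where "k = int (card K)"
  define coll where "coll j = (\<Sum>u\<in>K. card {v\<in>K. v ! j = u ! j})" for j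
  define dev where "dev j = (\<Sum>b<4. (4 * int (card {u\<in>K. u ! j = b}) - k) ^ 2)" for j
  have "finite K" "K \<subseteq> words 4 11"
    using assms(1) finite_C finite_subset words_C by blast+
  have "(\<Sum>j<11. coll j) = (\<Sum>u\<in>K. \<Sum>j<11. card {v\<in>K. v ! j = u ! j})"
    unfolding coll_def by (rule sum.swap)
  also have "\<dots> = (\<Sum>u\<in>K. \<Sum>v\<in>K. agreements u v)"
    using assms(1) \<open>finite K\<close> length_C by (intro sum.cong refl) (simp add: sum_agreements subset_iff)
  also have "\<dots> \<le> (\<Sum>u\<in>K. 3 * card K + 8)"
    using assms(1) sum_agreements_le by (intro sum_mono) auto
  also have "\<dots> = card K * (3 * card K + 8)"
    by simp
  finally have "int (\<Sum>j<11. coll j) \<le> int (card K * (3 * card K + 8))"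
    by (simp only: of_nat_le_iff)
  then have upper: "(\<Sum>j<11. int (coll j)) \<le> 3 * k ^ 2 + 8 * k"
    by (simp add: k_def power2_eq_square algebra_simps)
  have "{v\<in>K. v ! i = u ! i} = K" if "u \<in> K" for u
    using assms(3) that by auto
  then have "coll i = card K ^ 2"
    by (simp add: coll_def power2_eq_square)
  moreover have "16 * int (coll j) = 4 * k ^ 2 + dev j" if "j < 11" for j
    using sum_sq_column_deviation[OF \<open>K \<subseteq> words 4 11\<close> \<open>finite K\<close> that]
    by (simp add: coll_def dev_def k_def)
  ultimately have "(\<Sum>j<11. 16 * int (coll j)) = 16 * k ^ 2 + (\<Sum>j\<in>{..<11} - {i}. 4 * k ^ 2 + dev j)"
    using sum.remove[of "{..<11}" i "\<lambda>j. 16 * int (coll j)"] assms(2) by (simp add: k_def)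
  then have "(\<Sum>j<11. 16 * int (coll j)) = 56 * k ^ 2 + (\<Sum>j\<in>{..<11} - {i}. dev j)"
    using assms(2) by (simp add: sum.distrib)
  with upper show ?thesis
    by (simp add: k_def dev_def flip: sum_distrib_left)
qed

lemma card_le_16_if_constant_column:
  assumes "K \<subseteq> C" "i < 11" "\<And>u. u \<in> K \<Longrightarrow> u ! i = a"
  shows "card K \<le> 16"
proof -
  let ?k = "int (card K)"
  have "0 \<le> (\<Sum>j\<in>{..<11} - {i}. \<Sum>b<4. (4 * int (card {u\<in>K. u ! j = b}) - ?k) ^ 2)"
    by (intro sum_nonneg) auto
  then have "?k * ?k \<le> 16 * ?k"
    using constant_column_bound[OF assms] by (simp add: power2_eq_square)
  then show ?thesis
    by (cases "?k = 0") simp_all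
qed

lemma balanced_if_constant_column_card_16:
  assumes "K \<subseteq> C" "i < 11" "\<And>u. u \<in> K \<Longrightarrow> u ! i = a" "card K = 16"
    and "j < 11" "j \<noteq> i" "b < 4"
  shows "card {u\<in>K. u ! j = b} = 4"
proof -
  define dev where "dev j b = (4 * int (card {u\<in>K. u ! j = b}) - 16) ^ 2" for j b
  have dev_nonneg: "0 \<le> dev j b" for j b
    by (simp add: dev_def)
  have "(\<Sum>j\<in>{..<11} - {i}. \<Sum>b<4. dev j b) \<le> 0"
    using constant_column_bound[OF assms(1-3)] assms(4) by (simp add: dev_def)
  then have "(\<Sum>j\<in>{..<11} - {i}. \<Sum>b<4. dev j b) = 0"
    using dev_nonneg by (simp add: antisym sum_nonneg)
  then have "dev j b = 0"
    using assms(5-7) dev_nonneg by (simp add: sum_nonneg_eq_0_iff sum_nonneg)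
  then show ?thesis
    by (simp add: dev_def)
qed

lemma sum_card_column_class: "i < 11 \<Longrightarrow> (\<Sum>a<4. card {u\<in>C. u ! i = a}) = 61"
  using sum_card_fiber[of C "{..<4}" "\<lambda>u. u ! i"] finite_C nth_C card_C by auto

(* 937 = 3 * 16^2 + 13^2 is the largest sum of squares of four counts in [13, 16] adding up to 61. *)
lemma column_collisions_le_937:
  assumes "i < 11"
  shows "(\<Sum>u\<in>C. card {v\<in>C. v ! i = u ! i}) \<le> 937"
proof -
  define m where "m a = int (card {u\<in>C. u ! i = a})" for a
  have "(\<Sum>a<4. m a) = 61"
    using sum_card_column_class[OF assms] by (simp add: m_def flip: of_nat_sum)
  then have "m 0 + m 1 + m 2 + m 3 = 61"
    by (simp add: eval_nat_numeral)
  have "card {u\<in>C. u ! i = a} \<le> 16" for a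
    by (rule card_le_16_if_constant_column[OF _ assms]) auto
  then have le_16: "m a \<le> 16" for a
    by (simp add: m_def)
  have "13 \<le> m a" if "a < 4" for a
  proof -
    have "a \<in> {0, 1, 2, 3}"
      using that by auto
    then show ?thesis
      using \<open>m 0 + m 1 + m 2 + m 3 = 61\<close> le_16[of 0] le_16[of 1] le_16[of 2] le_16[of 3] by auto
  qed
  have "(\<Sum>u\<in>C. card {v\<in>C. v ! i = u ! i}) = (\<Sum>a<4. card {u\<in>C. u ! i = a} ^ 2)"
    using sum_card_fiber_sq[of C "{..<4}" "\<lambda>u. u ! i"] finite_C nth_C assms by auto
  then have "int (\<Sum>u\<in>C. card {v\<in>C. v ! i = u ! i}) = (\<Sum>a<4. m a ^ 2)"
    by (simp add: m_def)
  also have "\<dots> \<le> (\<Sum>a<4. (13 + 16) * m a - 13 * 16)"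
    using le_16 \<open>\<And>a. a < 4 \<Longrightarrow> 13 \<le> m a\<close> by (intro sum_mono square_le_chord) auto
  also have "\<dots> = 937"
    using \<open>(\<Sum>a<4. m a) = 61\<close> by (simp add: sum_subtractf flip: sum_distrib_left)
  finally show ?thesis
    by linarith
qed

(* 235 = 7 * 61 - 12 * 16: the bound m^2 \<ge> 7 m - 12 summed over the 16 pairs of symbols. *)
lemma pair_collisions_ge_235:
  assumes "i < 11" "j < 11"
  shows "235 \<le> (\<Sum>u\<in>C. card {v\<in>C. v ! i = u ! i \<and> v ! j = u ! j})"
proof -
  have "(\<lambda>w. (w ! i, w ! j)) ` C \<subseteq> {..<4} \<times> {..<4}"
    using nth_C assms by auto
  from sum_card_fiber_sq_ge[OF finite_C _ this, of 3]
  have "235 \<le> int (\<Sum>u\<in>C. card {v\<in>C. v ! i = u ! i \<and> v ! j = u ! j})"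
    using card_C by simp
  then show ?thesis
    by linarith
qed

lemma sum_weight_row:
  assumes "u \<in> C"
  shows "(\<Sum>v\<in>C - {u}. weight u v)
           = 3 * (\<Sum>i<11. int (card {v\<in>C. v ! i = u ! i}))
             - (\<Sum>i<11. \<Sum>j<11. int (card {v\<in>C. v ! i = u ! i \<and> v ! j = u ! j})) + 88"
proof -
  \<comment> \<open>The diagonal term is \<open>weight u u = 11 * (3 - 11) = -88\<close>.\<close>
  have "(\<Sum>v\<in>C - {u}. weight u v) = (\<Sum>v\<in>C. weight u v) - weight u u"
    using sum.remove[OF finite_C assms, of "weight u"] by simp
  also have "\<dots> = 3 * int (\<Sum>v\<in>C. agreements u v) - int (\<Sum>v\<in>C. agreements u v ^ 2) + 88"
    using length_C[OF assms]
    by (simp add: weight_def sum_subtractf sum_distrib_left algebra_simps power2_eq_square)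
  finally show ?thesis
    using length_C[OF assms] by (simp add: sum_agreements[OF finite_C] sum_agreements_sq[OF finite_C])
qed

lemma sum_weight_le_132: "(\<Sum>u\<in>C. \<Sum>v\<in>C - {u}. weight u v) \<le> 132"
proof -
  define c where "c u i = int (card {v\<in>C. v ! i = u ! i})" for u i
  define c2 where "c2 u i j = int (card {v\<in>C. v ! i = u ! i \<and> v ! j = u ! j})" for u i j
  define N where "N i = (\<Sum>u\<in>C. c u i)" for i
  define P where "P i j = (\<Sum>u\<in>C. c2 u i j)" for i j
  have "(\<Sum>u\<in>C. \<Sum>i<11. \<Sum>j<11. c2 u i j) = (\<Sum>i<11. \<Sum>u\<in>C. \<Sum>j<11. c2 u i j)"
    by (rule sum.swap)
  also have "\<dots> = (\<Sum>i<11. \<Sum>j<11. P i j)"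
    unfolding P_def by (intro sum.cong refl sum.swap)
  finally have swap_P: "(\<Sum>u\<in>C. \<Sum>i<11. \<Sum>j<11. c2 u i j) = (\<Sum>i<11. \<Sum>j<11. P i j)" .
  have "(\<Sum>u\<in>C. \<Sum>v\<in>C - {u}. weight u v)
      = 3 * (\<Sum>u\<in>C. \<Sum>i<11. c u i) - (\<Sum>u\<in>C. \<Sum>i<11. \<Sum>j<11. c2 u i j) + 88 * 61"
    using card_C by (simp add: sum_weight_row c_def c2_def sum.distrib sum_subtractf sum_distrib_left)
  also have "\<dots> = (\<Sum>i<11. 3 * N i - (\<Sum>j<11. P i j)) + 88 * 61"
    unfolding swap_P N_def sum.swap[of c "{..<11}" C] by (simp add: sum_subtractf sum_distrib_left)
  also have "\<dots> \<le> (\<Sum>i<(11::nat). -476) + 88 * 61"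
  proof (intro add_right_mono sum_mono)
    fix i :: nat
    assume "i \<in> {..<11}"
    then have "(\<Sum>j<11. P i j) = N i + (\<Sum>j\<in>{..<11} - {i}. P i j)"
      by (simp add: sum.remove P_def N_def c_def c2_def)
    moreover have "(\<Sum>j\<in>{..<11} - {i}. 235) \<le> (\<Sum>j\<in>{..<11} - {i}. P i j)"
    proof (rule sum_mono)
      fix j
      assume "j \<in> {..<11} - {i}"
      then show "235 \<le> P i j"
        using \<open>i \<in> {..<11}\<close> pair_collisions_ge_235[of i j] by (simp add: P_def c2_def flip: of_nat_sum)
    qed
    moreover have "N i \<le> 937"
      using \<open>i \<in> {..<11}\<close> column_collisions_le_937[of i] by (simp add: N_def c_def flip: of_nat_sum)
    ultimately show "3 * N i - (\<Sum>j<11. P i j) \<le> -476"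
      using \<open>i \<in> {..<11}\<close> by simp
  qed
  finally show ?thesis
    by simp
qed

lemma sum_weight_constant_column_ge_2:
  assumes S: "S \<subseteq> C" "i < 11" "\<And>w. w \<in> S \<Longrightarrow> w ! i = a" "card S = 16"
    and u: "u \<in> C" "u ! i \<noteq> a"
  shows "2 \<le> (\<Sum>w\<in>S. weight u w)"
proof -
  have "finite S"
    using S(1) finite_C finite_subset by blast
  have "u \<notin> S"
    using S(3) u(2) by blast
  define X where "X j = card {w\<in>S. w ! j = u ! j}" for j
  have "{w\<in>S. w ! i = u ! i} = {}"
    using S(3) u(2) by auto
  then have "X i = 0"
    by (simp only: X_def card.empty)
  moreover have "X j = 4" if "j \<in> {..<11} - {i}" for j
    using balanced_if_constant_column_card_16[OF S, of j "u ! j"] that nth_C[OF u(1)]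
    by (simp add: X_def)
  ultimately have "(\<Sum>w\<in>S. agreements u w) = 40"
    using sum_agreements[OF \<open>finite S\<close> length_C[OF u(1)]] sum.remove[of "{..<11}" i X] S(2)
    by (simp add: X_def)
  then have "(\<Sum>w\<in>S. 3 - int (agreements u w)) = 8"
    using S(4) by (simp add: sum_subtractf flip: of_nat_sum)
  then have "\<not> (\<forall>w\<in>S. 3 dvd (3 - int (agreements u w)))"
    using dvd_sum[of S 3 "\<lambda>w. 3 - int (agreements u w)"] by auto
  then obtain w where w: "w \<in> S" "\<not> 3 dvd (3 - int (agreements u w))"
    by blast
  with S(1) \<open>u \<notin> S\<close> u(1) have "agreements u w \<le> 3" "u \<noteq> w"
    using agreements_le_3 by auto
  with w(2) have "agreements u w = 1 \<or> agreements u w = 2"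
    by (auto simp: le_Suc_eq numeral_eq_Suc)
  then have "weight u w = 2"
    by (auto simp: weight_def)
  moreover have "weight u w \<le> (\<Sum>w\<in>S. weight u w)"
    using w(1) \<open>finite S\<close> S(1) \<open>u \<notin> S\<close> u(1) weight_nonneg
    by (intro member_le_sum) auto
  ultimately show ?thesis
    by simp
qed

lemma ex_column_class_card_16:
  assumes "i < 11"
  shows "\<exists>a. card {u\<in>C. u ! i = a} = 16"
proof (rule ccontr)
  assume no_16: "\<nexists>a. card {u\<in>C. u ! i = a} = 16"
  have "card {u\<in>C. u ! i = a} \<le> 15" for a
  proof -
    have "card {u\<in>C. u ! i = a} \<le> 16"
      by (rule card_le_16_if_constant_column[OF _ assms]) auto
    moreover have "card {u\<in>C. u ! i = a} \<noteq> 16"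
      using no_16 by blast
    ultimately show ?thesis
      by linarith
  qed
  then have "(\<Sum>a<4. card {u\<in>C. u ! i = a}) \<le> (\<Sum>a<(4::nat). 15)"
    by (intro sum_mono)
  then show False
    using sum_card_column_class[OF assms] by simp
qed

lemma sum_weight_ge_180: "180 \<le> (\<Sum>u\<in>C. \<Sum>v\<in>C - {u}. weight u v)"
proof -
  obtain a where card_16: "card {u\<in>C. u ! 0 = a} = 16"
    using ex_column_class_card_16[of 0] by auto
  define S where "S = {u\<in>C. u ! 0 = a}"
  have "S \<subseteq> C" "finite S"
    using finite_C by (auto simp: S_def)
  have "card (C - S) = 45"
    using card_Diff_subset[OF \<open>finite S\<close> \<open>S \<subseteq> C\<close>] card_16 card_C by (simp add: S_def)
  have "2 \<le> (\<Sum>v\<in>S. weight u v)" if "u \<in> C - S" for u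
    using that by (intro sum_weight_constant_column_ge_2[of S 0 a]) (auto simp: S_def card_16)
  then have "(\<Sum>u\<in>C - S. 2) \<le> (\<Sum>u\<in>C - S. \<Sum>v\<in>S. weight u v)"
    by (rule sum_mono)
  then have "90 \<le> (\<Sum>u\<in>C - S. \<Sum>v\<in>S. weight u v)"
    using \<open>card (C - S) = 45\<close> by simp
  moreover have "(\<Sum>u\<in>C - S. \<Sum>v\<in>S. weight u v) + (\<Sum>u\<in>C - S. \<Sum>v\<in>S. weight u v)
      \<le> (\<Sum>u\<in>C. \<Sum>v\<in>C - {u}. weight u v)"
    using finite_C \<open>S \<subseteq> C\<close> weight_nonneg weight_commute by (rule sum_offdiag_ge_cut)
  ultimately show ?thesis
    by linarith
qed

end

lemma no_code_11_61_8:
  assumes "is_code 4 11 8 C"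
  shows "card C \<noteq> 61"
proof
  assume "card C = 61"
  then interpret code_11_61_8 C
    using assms by unfold_locales
  show False
    using sum_weight_ge_180 sum_weight_le_132 by linarith
qed

lemma card_code_le_60:
  assumes "is_code 4 11 8 C"
  shows "card C \<le> 60"
proof (rule ccontr)
  assume "\<not> card C \<le> 60"
  then have "61 \<le> card C"
    by simp
  then obtain D where "D \<subseteq> C" "card D = 61"
    by (rule obtain_subset_with_card_n)
  then show False
    using no_code_11_61_8 is_code_subset[OF assms] by blast
qed

theorem proposition5p5:
  shows "A_code 4 11 8 \<le> 60"
proof -
  have "is_code 4 11 8 {}"
    by (simp add: is_code_def)
  then have "{card C | C. is_code 4 11 8 C} \<noteq> {}"
    by blast
  moreover have "{card C | C. is_code 4 11 8 C} \<subseteq> {..60}"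
    using card_code_le_60 by auto
  then have "finite {card C | C. is_code 4 11 8 C}"
    by (rule finite_subset) simp
  ultimately show ?thesis
    unfolding A_code_def using card_code_le_60 by (intro Max.boundedI) auto
qed

end
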